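(* Let $d\ge 1$ and $q\ge 2$ be integers. (a) If $\gcd(d,q)=1$, then the Hamming graph $H(d,q)$ is $\mathbb{Z}_{q^d}$-distance antimagic. In particular, the complete graph $K_q$ is $\mathbb{Z}_q$-distance antimagic for every $q\ge 2$. (b) If both $d$ and $q$ are even, then $H(d,q)$ is not $\mathbb{Z}_{q^d}$-distance antimagic.
   Context: $H(d,q)$ is the graph with vertex set $\mathbb{Z}_q^d$ in which two $d$-tuples are adjacent iff they differ in exactly one coordinate (equivalently the Cartesian product of $d$ copies of $K_q$). $\mathbb{Z}_m$ is the cyclic group of integers modulo $m$. For a graph $G$ with $n$ vertices and an Abelian group $A$ of order $n$ (written additively), and a bijection $f:V(G)\to A$, the weight of $x$ is $w_f(x)=\sum_{y\in N(x)} f(y)$ computed in $A$ ($N(x)$ the open neighbourhood). $f$ is an $A$-distance antimagic labelling if all weights are pairwise distinct; $G$ is $A$-distance antimagic if it admits such a labelling. *)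

theory Defs
  imports "HOL-Library.FuncSet"
begin

definition hamming_vertices :: "nat \<Rightarrow> nat \<Rightarrow> (nat \<Rightarrow> nat) set" where
  "hamming_vertices d q = PiE {..<d} (\<lambda>_. {..<q})"

definition hamming_adj :: "nat \<Rightarrow> (nat \<Rightarrow> nat) \<Rightarrow> (nat \<Rightarrow> nat) \<Rightarrow> bool" where
  "hamming_adj d x y \<longleftrightarrow> card {i \<in> {..<d}. x i \<noteq> y i} = 1"

text \<open>A graph with vertex set V and adjacency relation adj is Z_m-distance antimagic
  (where Z_m is represented by {0..<m} with addition mod m): there is a bijection
  f : V -> Z_m such that the weights w(x) = sum of f over the open neighbourhood of x,
  computed mod m, are pairwise distinct.\<close>
definition Zm_distance_antimagic :: "'a set \<Rightarrow> ('a \<Rightarrow> 'a \<Rightarrow> bool) \<Rightarrow> nat \<Rightarrow> bool" where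
  "Zm_distance_antimagic V adj m \<longleftrightarrow>
     (\<exists>f. bij_betw f V {..<m} \<and>
          inj_on (\<lambda>x. (\<Sum>y\<in>{y \<in> V. adj x y}. f y) mod m) V)"

end

theory Submission
  imports Defs
begin

text \<open>
  Encode a vertex x of H(d,q) by its base-q value \<open>\<Sum>j<d. x j * q ^ j\<close>. Changing coordinate i
  of x to v changes this value by \<open>(v - x i) * q ^ i\<close>; summing over all d(q-1) neighbours shows
  that the weight of x is \<open>(d(q-1) - q) * value x + C\<close> for a constant C. The factor
  \<open>d(q-1) - q \<equiv> -d (mod q)\<close> is a unit modulo \<open>q ^ d\<close> when \<open>gcd(d,q) = 1\<close>, so distinct labels
  give distinct weights. For \<open>K\<^sub>q\<close> the identity labelling gives weight
  \<open>(0 + 1 + \<dots> + (q - 1)) - x\<close>, the same situation with factor -1.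

  Conversely, in a k-regular graph with a \<open>\<int>\<^sub>m\<close>-distance antimagic labelling, both the labels and
  the weights run through all of \<open>\<int>\<^sub>m\<close>, and each label occurs k times in the sum of all weights;
  hence \<open>k S \<equiv> S (mod m)\<close> for \<open>S = 0 + 1 + \<dots> + (m - 1)\<close>. If k and m are even,
  then \<open>k S \<equiv> 0\<close> while \<open>S \<equiv> m/2\<close>; for H(d,q) with d, q even, \<open>k = d(q-1)\<close> and \<open>m = q ^ d\<close> are.
\<close>

lemma Zm_distance_antimagicI_affine:
  fixes a c :: int
  assumes f: "bij_betw f V {..<m}" and "coprime a (int m)"
    and weight: "\<And>x. x \<in> V \<Longrightarrow>
      int (\<Sum>y\<in>{y \<in> V. adj x y}. f y) mod int m = (a * int (f x) + c) mod int m"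
  shows "Zm_distance_antimagic V adj m"
proof -
  have "inj_on (\<lambda>n. (a * int n + c) mod int m) {..<m}"
  proof (rule inj_onI)
    fix n n' assume n: "n \<in> {..<m}" "n' \<in> {..<m}"
      and "(a * int n + c) mod int m = (a * int n' + c) mod int m"
    then have "int m dvd a * (int n - int n')"
      by (simp add: mod_eq_dvd_iff algebra_simps)
    with \<open>coprime a (int m)\<close> have dvd: "int m dvd int n - int n'"
      by (simp add: coprime_dvd_mult_right_iff coprime_commute)
    show "n = n'"
    proof (rule ccontr)
      assume "n \<noteq> n'"
      then have "int m \<le> \<bar>int n - int n'\<bar>" using dvd_imp_le_int[OF _ dvd] by simp
      with n show False by auto
    qed
  qed
  then have "inj_on ((\<lambda>n. (a * int n + c) mod int m) \<circ> f) V"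
    using f by (simp add: comp_inj_on bij_betw_def)
  then have "inj_on (int \<circ> (\<lambda>x. (\<Sum>y\<in>{y \<in> V. adj x y}. f y) mod m)) V"
    by (rule inj_on_cong[THEN iffD1, rotated]) (simp only: o_def of_nat_mod weight)
  then show ?thesis
    unfolding Zm_distance_antimagic_def using f inj_on_imageI2 by blast
qed

lemma sum_neighbour_sums_regular:
  fixes f :: "'a \<Rightarrow> 'b::comm_semiring_1"
  assumes "finite V" and adj_commute: "\<And>x y. adj x y \<longleftrightarrow> adj y x"
    and regular: "\<And>x. x \<in> V \<Longrightarrow> card {y \<in> V. adj x y} = k"
  shows "(\<Sum>x\<in>V. \<Sum>y\<in>{y \<in> V. adj x y}. f y) = of_nat k * (\<Sum>y\<in>V. f y)"
proof -
  have "(\<Sum>x\<in>V. \<Sum>y\<in>{y \<in> V. adj x y}. f y) = (\<Sum>x\<in>V. \<Sum>y\<in>V. if adj x y then f y else 0)"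
    using \<open>finite V\<close> by (simp add: sum.inter_filter)
  also have "\<dots> = (\<Sum>y\<in>V. \<Sum>x\<in>V. if adj x y then f y else 0)"
    by (rule sum.swap)
  also have "\<dots> = (\<Sum>y\<in>V. of_nat k * f y)"
  proof (rule sum.cong)
    fix y assume "y \<in> V"
    have "(\<Sum>x\<in>V. if adj x y then f y else 0) = (\<Sum>x\<in>{x \<in> V. adj x y}. f y)"
      using \<open>finite V\<close> by (rule sum.inter_filter[symmetric])
    also have "{x \<in> V. adj x y} = {x \<in> V. adj y x}"
      using adj_commute by blast
    finally show "(\<Sum>x\<in>V. if adj x y then f y else 0) = of_nat k * f y"
      using regular[OF \<open>y \<in> V\<close>] by simp
  qed simp
  finally show ?thesis by (simp add: sum_distrib_left)
qed

lemma Zm_distance_antimagic_regular_cong: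
  assumes "Zm_distance_antimagic V adj m" and "\<And>x y. adj x y \<longleftrightarrow> adj y x"
    and "\<And>x. x \<in> V \<Longrightarrow> card {y \<in> V. adj x y} = k"
  shows "k * (\<Sum>i<m. i) mod m = (\<Sum>i<m. i) mod m"
proof -
  obtain f where f: "bij_betw f V {..<m}"
    and inj: "inj_on (\<lambda>x. (\<Sum>y\<in>{y \<in> V. adj x y}. f y) mod m) V"
    using assms(1) unfolding Zm_distance_antimagic_def by blast
  define W where "W x = (\<Sum>y\<in>{y \<in> V. adj x y}. f y)" for x
  note inj = inj[folded W_def]
  have "finite V" using f bij_betw_finite by blast
  have "(\<lambda>x. W x mod m) ` V = {..<m}"
  proof (rule card_subset_eq)
    have "m > 0" if "x \<in> V" for x using bij_betwE[OF f] that by fastforce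
    then show "(\<lambda>x. W x mod m) ` V \<subseteq> {..<m}" by auto
    show "card ((\<lambda>x. W x mod m) ` V) = card {..<m}"
      using inj bij_betw_same_card[OF f] by (simp add: card_image)
  qed simp
  then have weights_mod: "(\<Sum>x\<in>V. W x mod m) = (\<Sum>i<m. i)"
    using sum.reindex[OF inj, of id] by simp
  have labels: "(\<Sum>y\<in>V. f y) = (\<Sum>i<m. i)"
    using sum.reindex_bij_betw[OF f, of id] by simp
  have "k * (\<Sum>i<m. i) = (\<Sum>x\<in>V. W x)"
    unfolding W_def labels[symmetric]
    using sum_neighbour_sums_regular[OF \<open>finite V\<close> assms(2,3), of f] by simp
  also have "\<dots> mod m = (\<Sum>x\<in>V. W x mod m) mod m"
    by (rule mod_sum_eq[symmetric])
  finally show ?thesis unfolding weights_mod .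
qed

lemma sum_lessThan_mod_even:
  fixes m :: nat
  assumes "even m" and "m > 0"
  shows "(\<Sum>i<m. i) mod m = m div 2"
proof -
  obtain h where "m = 2 * h" using assms(1) by blast
  moreover obtain M where "h = Suc M" using assms(2) \<open>m = 2 * h\<close> gr0_implies_Suc by auto
  ultimately have m: "m = 2 * Suc M" by simp
  have "(\<Sum>i<m. i) = m * (m - 1) div 2"
    using Sum_Ico_nat[of 0 m] by (simp add: lessThan_atLeast0)
  also have "\<dots> = Suc M + m * M" unfolding m by (simp add: algebra_simps)
  finally have "(\<Sum>i<m. i) mod m = Suc M mod m" by simp
  also have "\<dots> = m div 2" using m by simp
  finally show ?thesis .
qed

lemma even_mult_sum_lessThan_mod:
  fixes m k :: nat
  assumes "even m" and "even k"
  shows "k * (\<Sum>i<m. i) mod m = 0"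
proof -
  have "2 * (\<Sum>i<m. i) = m * (m - 1)"
    using Sum_Ico_nat[of 0 m] assms(1) by (simp add: lessThan_atLeast0)
  moreover obtain j where "k = 2 * j" using assms(2) by blast
  ultimately have "k * (\<Sum>i<m. i) = m * ((m - 1) * j)" by (simp add: algebra_simps)
  then show ?thesis by simp
qed

lemma not_Zm_distance_antimagic_even_regular:
  assumes "\<And>x y. adj x y \<longleftrightarrow> adj y x" and "\<And>x. x \<in> V \<Longrightarrow> card {y \<in> V. adj x y} = k"
    and "even k" and "even m" and "m > 0"
  shows "\<not> Zm_distance_antimagic V adj m"
proof
  assume "Zm_distance_antimagic V adj m"
  from Zm_distance_antimagic_regular_cong[OF this assms(1,2)]
  have "m div 2 = 0"
    using sum_lessThan_mod_even even_mult_sum_lessThan_mod assms(3-5) by simp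
  with assms(4,5) show False by auto
qed

lemma hamming_adj_commute: "hamming_adj d x y \<longleftrightarrow> hamming_adj d y x"
proof -
  have "{i \<in> {..<d}. x i \<noteq> y i} = {i \<in> {..<d}. y i \<noteq> x i}" by auto
  then show ?thesis unfolding hamming_adj_def by simp
qed

lemma hamming_neighbours:
  assumes x: "x \<in> hamming_vertices d q"
  shows "{y \<in> hamming_vertices d q. hamming_adj d x y}
       = (\<Union>i<d. (\<lambda>v. x(i := v)) ` ({..<q} - {x i}))"
proof (intro equalityI subsetI)
  fix y assume "y \<in> {y \<in> hamming_vertices d q. hamming_adj d x y}"
  then have y: "y \<in> hamming_vertices d q" and "card {j \<in> {..<d}. x j \<noteq> y j} = 1"
    by (auto simp: hamming_adj_def)
  then obtain i where "{j \<in> {..<d}. x j \<noteq> y j} = {i}"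
    by (auto simp: card_1_singleton_iff)
  then have differs: "j < d \<and> x j \<noteq> y j \<longleftrightarrow> j = i" for j
    by (simp add: set_eq_iff)
  have "y = x(i := y i)"
  proof
    fix j
    show "y j = (x(i := y i)) j"
    proof (cases "j < d")
      case True
      then show ?thesis using differs[of j] by (cases "j = i") simp_all
    next
      case False
      then have "x j = undefined" "y j = undefined"
        using x y by (auto simp: hamming_vertices_def intro: PiE_arb)
      with False differs[of i] show ?thesis by auto
    qed
  qed
  moreover have "i < d" "x i \<noteq> y i" using differs[of i] by auto
  moreover from y \<open>i < d\<close> have "y i < q" by (auto simp: hamming_vertices_def)
  ultimately show "y \<in> (\<Union>i<d. (\<lambda>v. x(i := v)) ` ({..<q} - {x i}))"
    by (intro UN_I[of i]) auto
next
  fix y assume "y \<in> (\<Union>i<d. (\<lambda>v. x(i := v)) ` ({..<q} - {x i}))"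
  then obtain i v where "i < d" "v < q" "v \<noteq> x i" and y: "y = x(i := v)" by blast
  then have "{j \<in> {..<d}. x j \<noteq> y j} = {i}" by auto
  moreover have "y \<in> hamming_vertices d q"
    using x \<open>i < d\<close> \<open>v < q\<close> unfolding y hamming_vertices_def by (intro PiE_I) auto
  ultimately show "y \<in> {y \<in> hamming_vertices d q. hamming_adj d x y}"
    by (simp add: hamming_adj_def)
qed

lemma sum_hamming_neighbours:
  assumes "x \<in> hamming_vertices d q"
  shows "(\<Sum>y\<in>{y \<in> hamming_vertices d q. hamming_adj d x y}. g y)
       = (\<Sum>i<d. \<Sum>v\<in>{..<q} - {x i}. g (x(i := v)))"
proof -
  define line where "line i = (\<lambda>v. x(i := v)) ` ({..<q} - {x i})" for i
  have "line i \<inter> line j = {}" if "i \<noteq> j" for i j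
    using that unfolding line_def by (auto dest!: fun_cong[where x = i])
  then have "(\<Sum>y\<in>(\<Union>i<d. line i). g y) = (\<Sum>i<d. \<Sum>y\<in>line i. g y)"
    by (intro sum.UNION_disjoint) (auto simp: line_def)
  moreover have "inj_on (\<lambda>v. x(i := v)) A" for i A
    by (rule inj_onI) (drule fun_cong[where x = i], simp)
  ultimately show ?thesis
    unfolding hamming_neighbours[OF assms] by (simp add: line_def sum.reindex)
qed

lemma card_hamming_neighbours:
  assumes "x \<in> hamming_vertices d q"
  shows "card {y \<in> hamming_vertices d q. hamming_adj d x y} = d * (q - 1)"
proof -
  have "x i \<in> {..<q}" if "i < d" for i
    using assms that by (auto simp: hamming_vertices_def)
  then show ?thesis
    using sum_hamming_neighbours[OF assms, of "\<lambda>_. 1::nat"]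
    by (simp add: card_Diff_singleton)
qed

definition base_value :: "nat \<Rightarrow> nat \<Rightarrow> (nat \<Rightarrow> nat) \<Rightarrow> nat" where
  "base_value d q x = (\<Sum>j<d. x j * q ^ j)"

lemma base_value_less:
  assumes "\<forall>j<d. x j < q"
  shows "base_value d q x < q ^ d"
  using assms
proof (induction d)
  case 0
  then show ?case by (simp add: base_value_def)
next
  case (Suc d)
  then have "base_value (Suc d) q x < q ^ d + x d * q ^ d"
    by (simp add: base_value_def)
  also have "\<dots> = (x d + 1) * q ^ d" by simp
  also have "\<dots> \<le> q * q ^ d" using Suc.prems by (intro mult_le_mono1) auto
  finally show ?case by simp
qed

lemma base_value_eq_imp_eq:
  assumes "\<forall>j<d. x j < q \<and> y j < q" and "base_value d q x = base_value d q y"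
  shows "\<forall>j<d. x j = y j"
  using assms
proof (induction d)
  case 0
  then show ?case by simp
next
  case (Suc d)
  have lt: "base_value d q x < q ^ d" "base_value d q y < q ^ d"
    using Suc.prems(1) by (auto intro!: base_value_less)
  then have "q ^ d > 0" by linarith
  have eq: "base_value d q x + x d * q ^ d = base_value d q y + y d * q ^ d"
    using Suc.prems(2) by (simp add: base_value_def)
  have "base_value d q x = (base_value d q x + x d * q ^ d) mod q ^ d" using lt(1) by simp
  also have "\<dots> = base_value d q y" unfolding eq using lt(2) by simp
  finally have lower: "base_value d q x = base_value d q y" .
  have "x d = (base_value d q x + x d * q ^ d) div q ^ d"
    using lt(1) \<open>q ^ d > 0\<close> by simp
  also have "\<dots> = y d" unfolding eq using lt(2) \<open>q ^ d > 0\<close> by simp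
  finally have "x d = y d" .
  moreover have "\<forall>j<d. x j = y j"
    using Suc.IH[OF _ lower] Suc.prems(1) by simp
  ultimately show ?case by (simp add: less_Suc_eq)
qed

lemma bij_betw_base_value: "bij_betw (base_value d q) (hamming_vertices d q) {..<q ^ d}"
proof -
  have inj: "inj_on (base_value d q) (hamming_vertices d q)"
  proof (rule inj_onI)
    fix x y assume x: "x \<in> hamming_vertices d q" and y: "y \<in> hamming_vertices d q"
      and "base_value d q x = base_value d q y"
    then have "\<forall>j<d. x j = y j"
      by (intro base_value_eq_imp_eq) (auto simp: hamming_vertices_def)
    with x y show "x = y"
      unfolding hamming_vertices_def by (intro PiE_ext) auto
  qed
  have "base_value d q ` hamming_vertices d q = {..<q ^ d}"
  proof (rule card_subset_eq)
    show "base_value d q ` hamming_vertices d q \<subseteq> {..<q ^ d}"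
      by (auto simp: hamming_vertices_def intro!: base_value_less)
    show "card (base_value d q ` hamming_vertices d q) = card {..<q ^ d}"
      using inj by (simp add: card_image hamming_vertices_def card_PiE)
  qed simp
  with inj show ?thesis by (simp add: bij_betw_def)
qed

lemma base_value_fun_upd:
  assumes "i < d"
  shows "int (base_value d q (x(i := v)))
       = int (base_value d q x) + (int v - int (x i)) * int q ^ i"
proof -
  have split: "base_value d q y = (\<Sum>j\<in>{..<d} - {i}. y j * q ^ j) + y i * q ^ i" for y
    unfolding base_value_def using assms by (simp add: sum.remove)
  have "(\<Sum>j\<in>{..<d} - {i}. (x(i := v)) j * q ^ j) = (\<Sum>j\<in>{..<d} - {i}. x j * q ^ j)"
    by (intro sum.cong) auto
  then show ?thesis
    unfolding split[of x] split[of "x(i := v)"] by (simp add: algebra_simps)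
qed

lemma hamming_weight_base_value:
  assumes x: "x \<in> hamming_vertices d q"
  shows "int (\<Sum>y\<in>{y \<in> hamming_vertices d q. hamming_adj d x y}. base_value d q y)
       = (int d * (int q - 1) - int q) * int (base_value d q x)
         + (\<Sum>v<q. int v) * (\<Sum>i<d. int q ^ i)"
proof -
  define E where "E = int (base_value d q x)"
  define T where "T = (\<Sum>v<q. int v)"
  have line: "(\<Sum>v\<in>{..<q} - {x i}. int (base_value d q (x(i := v))))
      = (int q - 1) * E + (T - int q * int (x i)) * int q ^ i" if "i < d" for i
  proof -
    have "x i < q" using x \<open>i < d\<close> by (auto simp: hamming_vertices_def)
    \<comment> \<open>the term \<open>v = x i\<close> of the second sum vanishes, so it may run over all \<open>v < q\<close>\<close>
    have "(\<Sum>v\<in>{..<q} - {x i}. (int v - int (x i)) * int q ^ i)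
        = (\<Sum>v<q. (int v - int (x i)) * int q ^ i)"
      using \<open>x i < q\<close> by (simp add: sum.remove)
    also have "\<dots> = (T - int q * int (x i)) * int q ^ i"
      by (simp add: T_def sum_distrib_right sum_subtractf left_diff_distrib)
    finally show ?thesis
      using \<open>x i < q\<close>
      by (simp add: base_value_fun_upd[OF \<open>i < d\<close>] E_def sum.distrib card_Diff_singleton of_nat_diff)
  qed
  have "int (\<Sum>y\<in>{y \<in> hamming_vertices d q. hamming_adj d x y}. base_value d q y)
      = (\<Sum>i<d. (int q - 1) * E + (T - int q * int (x i)) * int q ^ i)"
    by (simp add: sum_hamming_neighbours[OF x] of_nat_sum line)
  also have "\<dots> = int d * (int q - 1) * E + T * (\<Sum>i<d. int q ^ i)
      - int q * (\<Sum>i<d. int (x i) * int q ^ i)"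
    by (simp add: sum.distrib sum_subtractf sum_distrib_left sum_distrib_right algebra_simps)
  also have "(\<Sum>i<d. int (x i) * int q ^ i) = E"
    by (simp add: E_def base_value_def)
  finally show ?thesis
    by (simp add: E_def T_def algebra_simps)
qed

lemma coprime_hamming_weight_factor:
  assumes "coprime d q"
  shows "coprime (int d * (int q - 1) - int q) (int (q ^ d))"
proof -
  have "int d * (int q - 1) - int q = (int d - 1) * int q + - int d"
    by (simp add: algebra_simps)
  then have "gcd (int q) (int d * (int q - 1) - int q) = gcd (int q) (- int d)"
    by (simp only: gcd_add_mult)
  with assms have "coprime (int d * (int q - 1) - int q) (int q)"
    by (simp add: coprime_iff_gcd_eq_1 gcd.commute)
  then show ?thesis by simp
qed

lemma hamming_Zm_distance_antimagic:
  assumes "coprime d q"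
  shows "Zm_distance_antimagic (hamming_vertices d q) (hamming_adj d) (q ^ d)"
  using bij_betw_base_value coprime_hamming_weight_factor[OF assms]
  by (rule Zm_distance_antimagicI_affine[where c = "(\<Sum>v<q. int v) * (\<Sum>i<d. int q ^ i)"])
    (simp only: hamming_weight_base_value)

lemma complete_graph_Zm_distance_antimagic:
  "Zm_distance_antimagic {..<q} (\<lambda>x y. x \<noteq> y) q"
proof (rule Zm_distance_antimagicI_affine[where f = id and a = "-1" and c = "\<Sum>v<q. int v"])
  fix x assume "x \<in> {..<q}"
  then have "{y \<in> {..<q}. x \<noteq> y} = {..<q} - {x}" and "x \<in> {..<q}" by auto
  then show "int (\<Sum>y\<in>{y \<in> {..<q}. x \<noteq> y}. id y) mod int q
      = (- 1 * int (id x) + (\<Sum>v<q. int v)) mod int q"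
    by (simp add: sum.remove of_nat_sum)
qed simp_all

lemma hamming_not_Zm_distance_antimagic:
  assumes "even d" and "even q" and "d \<ge> 1" and "q \<ge> 2"
  shows "\<not> Zm_distance_antimagic (hamming_vertices d q) (hamming_adj d) (q ^ d)"
  using hamming_adj_commute card_hamming_neighbours
proof (rule not_Zm_distance_antimagic_even_regular)
  show "even (d * (q - 1))" and "even (q ^ d)" and "q ^ d > 0"
    using assms by auto
qed

theorem mainTheorem3:
  fixes d q :: nat
  assumes "d \<ge> 1" and "q \<ge> 2"
  shows "(coprime d q \<longrightarrow>
            Zm_distance_antimagic (hamming_vertices d q) (hamming_adj d) (q ^ d))
       \<and> Zm_distance_antimagic {..<q} (\<lambda>x y. x \<noteq> y) q
       \<and> (even d \<and> even q \<longrightarrow>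
            \<not> Zm_distance_antimagic (hamming_vertices d q) (hamming_adj d) (q ^ d))"
  using hamming_Zm_distance_antimagic complete_graph_Zm_distance_antimagic
    hamming_not_Zm_distance_antimagic assms by blast

end
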